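(* For every $g\ge 2$, the Pearson degree correlation coefficient of $\mathcal{F}_g$ is $$r(\mathcal{F}_g)=\frac{(g-1)^2}{-3\cdot 2^g+g^2+2g+3}.$$
   Context: $\mathcal{F}_1$ is the 4-cycle; for $g>1$, $\mathcal{F}_g$ is obtained from $\mathcal{F}_{g-1}$ by replacing each edge $\{u,v\}$ with two new vertices each adjacent to both $u$ and $v$ (the edge $\{u,v\}$ itself is deleted). For a graph with $E$ edges whose $i$-th edge has endpoint degrees $j_i,k_i$, the Pearson correlation coefficient is $$r=\frac{E\sum_{i=1}^E j_ik_i-\left[\sum_{i=1}^E\frac12(j_i+k_i)\right]^2}{E\sum_{i=1}^E\frac12(j_i^2+k_i^2)-\left[\sum_{i=1}^E\frac12(j_i+k_i)\right]^2}.$$ *)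

theory Defs
  imports Complex_Main
begin

text \<open>Vertices: the four vertices of the initial 4-cycle, and new vertices
  created when an edge {u,v} is subdivided (two per edge, distinguished by a bool).\<close>
datatype vtx = Base nat | Mid vtx vtx bool

text \<open>A graph is given by its set of (undirected) edges, each a 2-element vertex set.\<close>
type_synonym graph = "vtx set set"

definition verts :: "graph \<Rightarrow> vtx set" where
  "verts E = \<Union> E"

definition deg :: "graph \<Rightarrow> vtx \<Rightarrow> nat" where
  "deg E v = card {e \<in> E. v \<in> e}"

text \<open>One step of the construction: each edge {u,v} is deleted and replaced by two
  new vertices, each adjacent to both u and v.  The new vertices are named
  Mid u v b for a chosen ordering (u,v) of the edge.\<close>
definition step :: "graph \<Rightarrow> graph" where
  "step E = (\<Union>e\<in>E. \<Union>b\<in>(UNIV::bool set).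
      (case (SOME p. e = {fst p, snd p}) of (u, v) \<Rightarrow>
         {{u, Mid u v b}, {v, Mid u v b}}))"

definition C4 :: graph where
  "C4 = {{Base 0, Base 1}, {Base 1, Base 2}, {Base 2, Base 3}, {Base 3, Base 0}}"

definition F :: "nat \<Rightarrow> graph" where
  "F g = (step ^^ (g - 1)) C4"

text \<open>Pearson degree correlation coefficient, exactly as in the paper, where for an
  edge e = {j-end, k-end}: j*k = prod of endpoint degrees, (j+k)/2 and (j^2+k^2)/2.\<close>
definition pearson :: "graph \<Rightarrow> real" where
  "pearson E = (let m = real (card E);
      S1 = (\<Sum>e\<in>E. \<Prod>v\<in>e. real (deg E v));
      S2 = (\<Sum>e\<in>E. (\<Sum>v\<in>e. real (deg E v)) / 2);
      S3 = (\<Sum>e\<in>E. (\<Sum>v\<in>e. real (deg E v) ^ 2) / 2)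
    in (m * S1 - S2 ^ 2) / (m * S3 - S2 ^ 2))"

end

theory Submission
  imports Defs
begin

text \<open>Subdividing turns every edge of a graph into four edges, each joining an old vertex,
  whose degree doubles, to a new vertex of degree 2. Hence the degree power sums over edge
  endpoints, \<open>\<Sum>\<^sub>e \<Sum>\<^sub>v\<^sub>\<in>\<^sub>e deg v ^ p\<close>, satisfy a linear recurrence, and the sum of endpoint
  degree products of the subdivided graph is 8 times the first such sum of the old one.
  Starting from the 4-cycle, all terms of the Pearson coefficient of \<open>\<F>\<^sub>g\<close> have closed forms
  of the form \<open>4\<^sup>g\<close> times a polynomial in \<open>g\<close> and \<open>2\<^sup>g\<close>, and \<open>16\<^sup>g\<close> cancels in the quotient.\<close>

definition edge_ends :: "vtx set \<Rightarrow> vtx \<times> vtx" where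
  "edge_ends e = (SOME p. e = {fst p, snd p})"

definition new_vertex :: "vtx set \<Rightarrow> bool \<Rightarrow> vtx" where
  "new_vertex e b = Mid (fst (edge_ends e)) (snd (edge_ends e)) b"

definition step_index :: "graph \<Rightarrow> (vtx set \<times> bool \<times> vtx) set" where
  "step_index E = (SIGMA e:E. UNIV \<times> e)"

definition step_edge :: "vtx set \<times> bool \<times> vtx \<Rightarrow> vtx set" where
  "step_edge = (\<lambda>(e, b, x). {x, new_vertex e b})"

text \<open>The last clause says that names \<open>Mid x y _\<close> are only used for vertices created by
  subdividing the edge \<open>{x, y}\<close>; it is what makes the vertices created by \<open>step\<close> fresh.\<close>
definition wf_graph :: "graph \<Rightarrow> bool" where
  "wf_graph E \<longleftrightarrow> finite E \<and> (\<forall>e\<in>E. card e = 2) \<and>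
     (\<forall>w\<in>verts E. \<forall>x y c. w = Mid x y c \<longrightarrow> x \<in> verts E \<and> y \<in> verts E \<and> {x, y} \<notin> E)"

definition degree_moment :: "nat \<Rightarrow> graph \<Rightarrow> real" where
  "degree_moment p E = (\<Sum>e\<in>E. \<Sum>v\<in>e. real (deg E v) ^ p)"

lemma wf_graph_card_edge: "wf_graph E \<Longrightarrow> e \<in> E \<Longrightarrow> card e = 2"
  unfolding wf_graph_def by blast

lemma wf_graph_finite: "wf_graph E \<Longrightarrow> finite E"
  unfolding wf_graph_def by blast

lemma wf_graph_finite_edge: "wf_graph E \<Longrightarrow> e \<in> E \<Longrightarrow> finite e"
  using wf_graph_card_edge card.infinite by fastforce

lemma in_verts: "x \<in> e \<Longrightarrow> e \<in> E \<Longrightarrow> x \<in> verts E"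
  unfolding verts_def by auto

lemma edge_ends: assumes "card e = 2" shows "e = {fst (edge_ends e), snd (edge_ends e)}"
proof -
  from assms obtain x y where "e = {x, y}" by (auto simp: card_2_iff)
  then have "\<exists>p. e = {fst p, snd p}" by (intro exI[of _ "(x, y)"]) auto
  then show ?thesis unfolding edge_ends_def by (rule someI_ex)
qed

lemma new_vertex_notin_verts:
  assumes "wf_graph E" "e \<in> E" shows "new_vertex e b \<notin> verts E"
proof
  assume "new_vertex e b \<in> verts E"
  with assms(1) have "{fst (edge_ends e), snd (edge_ends e)} \<notin> E"
    unfolding wf_graph_def new_vertex_def by blast
  with assms show False using edge_ends wf_graph_card_edge by metis
qed

lemma new_vertex_inject:
  assumes "wf_graph E" "e \<in> E" "e' \<in> E" "new_vertex e b = new_vertex e' b'"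
  shows "e = e' \<and> b = b'"
  using assms edge_ends[OF wf_graph_card_edge] unfolding new_vertex_def by (metis vtx.inject(2))

lemma step_eq_image: assumes "wf_graph E" shows "step E = step_edge ` step_index E"
proof -
  have "(case edge_ends e of (u, v) \<Rightarrow> {{u, Mid u v b}, {v, Mid u v b}}) = (\<lambda>x. {x, new_vertex e b}) ` e"
    if "e \<in> E" for e b
    using edge_ends[OF wf_graph_card_edge[OF assms that]]
    by (cases "edge_ends e") (auto simp: new_vertex_def)
  then have "step E = (\<Union>e\<in>E. \<Union>b. (\<lambda>x. {x, new_vertex e b}) ` e)"
    unfolding step_def edge_ends_def[symmetric] by simp
  also have "\<dots> = step_edge ` step_index E"
    unfolding step_edge_def step_index_def by auto
  finally show ?thesis .
qed

lemma inj_on_step_edge: assumes "wf_graph E" shows "inj_on step_edge (step_index E)"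
proof (rule inj_onI)
  fix d d' assume d: "d \<in> step_index E" "d' \<in> step_index E" "step_edge d = step_edge d'"
  obtain e b x e' b' x' where dd': "d = (e, b, x)" "d' = (e', b', x')" by (cases d, cases d')
  have mem: "e \<in> E" "x \<in> e" "e' \<in> E" "x' \<in> e'" using d(1,2) dd' unfolding step_index_def by auto
  have "new_vertex e b \<notin> verts E" "new_vertex e' b' \<notin> verts E"
    using new_vertex_notin_verts assms mem by auto
  moreover have "x \<in> verts E" "x' \<in> verts E" using mem in_verts by auto
  moreover have "{x, new_vertex e b} = {x', new_vertex e' b'}"
    using d(3) dd' unfolding step_edge_def by simp
  ultimately have "x = x' \<and> new_vertex e b = new_vertex e' b'" by (auto simp: doubleton_eq_iff)
  then show "d = d'" using new_vertex_inject[OF assms mem(1,3)] dd' by auto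
qed

lemma finite_step_index: "wf_graph E \<Longrightarrow> finite (step_index E)"
  unfolding step_index_def by (auto intro!: finite_SigmaI wf_graph_finite wf_graph_finite_edge)

lemma sum_step:
  assumes "wf_graph E"
  shows "(\<Sum>f\<in>step E. G f) = (\<Sum>e\<in>E. \<Sum>x\<in>e. G {x, new_vertex e False} + G {x, new_vertex e True})"
proof -
  have "(\<Sum>f\<in>step E. G f) = (\<Sum>d\<in>step_index E. G (step_edge d))"
    unfolding step_eq_image[OF assms] by (rule sum.reindex_cong[OF inj_on_step_edge[OF assms]]) simp_all
  also have "\<dots> = (\<Sum>e\<in>E. \<Sum>(b, x)\<in>UNIV \<times> e. G (step_edge (e, b, x)))"
    unfolding step_index_def
    using wf_graph_finite[OF assms] wf_graph_finite_edge[OF assms] by (subst sum.Sigma) auto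
  also have "\<dots> = (\<Sum>e\<in>E. \<Sum>b\<in>UNIV. \<Sum>x\<in>e. G (step_edge (e, b, x)))"
    by (simp add: sum.cartesian_product)
  also have "\<dots> = (\<Sum>e\<in>E. \<Sum>x\<in>e. G {x, new_vertex e False} + G {x, new_vertex e True})"
    by (simp add: UNIV_bool step_edge_def sum.distrib)
  finally show ?thesis .
qed

lemma card_step: assumes "wf_graph E" shows "card (step E) = 4 * card E"
proof -
  have "card (step E) = card (step_index E)"
    unfolding step_eq_image[OF assms] by (rule card_image[OF inj_on_step_edge[OF assms]])
  also have "\<dots> = (\<Sum>e\<in>E. card (UNIV \<times> e :: (bool \<times> vtx) set))"
    unfolding step_index_def
    using wf_graph_finite[OF assms] wf_graph_finite_edge[OF assms] by (simp add: card_SigmaI)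
  also have "\<dots> = (\<Sum>e\<in>E. 4)"
    using wf_graph_card_edge[OF assms] by (intro sum.cong) (auto simp: card_cartesian_product)
  finally show ?thesis by simp
qed

lemma verts_step:
  assumes "wf_graph E" shows "verts (step E) = verts E \<union> {new_vertex e b |e b. e \<in> E}"
proof -
  have "e \<noteq> {}" if "e \<in> E" for e using wf_graph_card_edge[OF assms that] by auto
  then show ?thesis
    unfolding verts_def step_eq_image[OF assms] step_index_def step_edge_def by blast
qed

lemma wf_graph_step: assumes "wf_graph E" shows "wf_graph (step E)"
proof -
  have step_edgeE: "\<exists>e b x. e \<in> E \<and> x \<in> e \<and> f = {x, new_vertex e b}" if "f \<in> step E" for f
    using that unfolding step_eq_image[OF assms] step_index_def step_edge_def by auto
  have card: "card f = 2" if f: "f \<in> step E" for f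
  proof -
    obtain e b x where "e \<in> E" "x \<in> e" "f = {x, new_vertex e b}"
      using step_edgeE[OF f] by blast
    moreover have "x \<noteq> new_vertex e b"
      using calculation in_verts new_vertex_notin_verts[OF assms] by blast
    ultimately show ?thesis by simp
  qed
  have no_old_edge: "{x, y} \<notin> step E" if "x \<in> verts E" "y \<in> verts E" for x y
  proof
    assume "{x, y} \<in> step E"
    then obtain e b z where "e \<in> E" "{x, y} = {z, new_vertex e b}" using step_edgeE by blast
    then show False using that new_vertex_notin_verts[OF assms] by (auto simp: doubleton_eq_iff)
  qed
  have mid: "x \<in> verts E \<and> y \<in> verts E" if "w \<in> verts (step E)" "w = Mid x y c" for w x y c
  proof (cases "w \<in> verts E")
    case True
    with assms that(2) show ?thesis unfolding wf_graph_def by blast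
  next
    case False
    with that verts_step[OF assms] obtain e b where e: "e \<in> E" "w = new_vertex e b" by blast
    then have "{x, y} = e"
      using that(2) edge_ends[OF wf_graph_card_edge[OF assms e(1)]] by (simp add: new_vertex_def)
    with e(1) show ?thesis using in_verts by blast
  qed
  have "finite (step E)" using step_eq_image[OF assms] finite_step_index[OF assms] by simp
  moreover have "{x, y} \<notin> step E" if "w \<in> verts (step E)" "w = Mid x y c" for w x y c
    using no_old_edge mid[OF that] by blast
  moreover have "verts E \<subseteq> verts (step E)" using verts_step[OF assms] by blast
  ultimately show ?thesis
    unfolding wf_graph_def using card mid by (meson subsetD)
qed

lemma deg_step_eq_card:
  assumes "wf_graph E" shows "deg (step E) v = card {d \<in> step_index E. v \<in> step_edge d}"
proof -
  have "{f \<in> step E. v \<in> f} = step_edge ` {d \<in> step_index E. v \<in> step_edge d}"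
    using step_eq_image[OF assms] by auto
  then show ?thesis
    unfolding deg_def using inj_on_step_edge[OF assms]
    by (simp add: card_image inj_on_subset)
qed

lemma deg_step_old:
  assumes "wf_graph E" "v \<in> verts E" shows "deg (step E) v = 2 * deg E v"
proof -
  have "{d \<in> step_index E. v \<in> step_edge d} = (\<lambda>(e, b). (e, b, v)) ` ({e \<in> E. v \<in> e} \<times> UNIV)"
    using assms new_vertex_notin_verts[OF assms(1)]
    unfolding step_index_def step_edge_def by fastforce
  also have "card \<dots> = card ({e \<in> E. v \<in> e} \<times> (UNIV :: bool set))"
    by (rule card_image) (auto simp: inj_on_def)
  finally show ?thesis
    unfolding deg_step_eq_card[OF assms(1)]
    using wf_graph_finite[OF assms(1)] by (simp add: deg_def card_cartesian_product)
qed

lemma deg_step_new: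
  assumes "wf_graph E" "e \<in> E" shows "deg (step E) (new_vertex e b) = 2"
proof -
  have "{d \<in> step_index E. new_vertex e b \<in> step_edge d} = (\<lambda>x. (e, b, x)) ` e"
  proof (intro set_eqI iffI)
    fix d assume d: "d \<in> {d \<in> step_index E. new_vertex e b \<in> step_edge d}"
    obtain e' b' x where dd: "d = (e', b', x)" by (cases d)
    with d have e': "e' \<in> E" "x \<in> e'" and new: "new_vertex e b \<in> {x, new_vertex e' b'}"
      unfolding step_index_def step_edge_def by auto
    have "new_vertex e b \<noteq> x"
      using e' in_verts new_vertex_notin_verts[OF assms] by blast
    with new have "new_vertex e b = new_vertex e' b'" by blast
    then have "e' = e \<and> b' = b" using new_vertex_inject[OF assms(1) e'(1) assms(2)] by metis
    with dd e'(2) show "d \<in> (\<lambda>x. (e, b, x)) ` e" by blast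
  qed (use assms in \<open>auto simp: step_index_def step_edge_def\<close>)
  then show ?thesis
    using wf_graph_card_edge[OF assms]
    by (simp add: deg_step_eq_card[OF assms(1)] card_image inj_on_def)
qed

lemma degrees_step_edge:
  assumes "wf_graph E" "e \<in> E" "x \<in> e"
  shows "(\<Sum>v\<in>{x, new_vertex e b}. real (deg (step E) v) ^ p) = (2 * real (deg E x)) ^ p + 2 ^ p"
    and "(\<Prod>v\<in>{x, new_vertex e b}. real (deg (step E) v)) = 4 * real (deg E x)"
proof -
  have "x \<in> verts E" using assms in_verts by blast
  moreover then have "x \<noteq> new_vertex e b" using new_vertex_notin_verts[OF assms(1,2)] by auto
  ultimately show "(\<Sum>v\<in>{x, new_vertex e b}. real (deg (step E) v) ^ p) = (2 * real (deg E x)) ^ p + 2 ^ p"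
    and "(\<Prod>v\<in>{x, new_vertex e b}. real (deg (step E) v)) = 4 * real (deg E x)"
    using deg_step_old[OF assms(1)] deg_step_new[OF assms(1,2)] by simp_all
qed

lemma degree_moment_step:
  assumes "wf_graph E"
  shows "degree_moment p (step E) = 2 ^ (p + 1) * degree_moment p E + 2 ^ (p + 2) * real (card E)"
proof -
  have "degree_moment p (step E) = (\<Sum>e\<in>E. \<Sum>x\<in>e. 2 ^ (p + 1) * real (deg E x) ^ p + 2 ^ (p + 1))"
    unfolding degree_moment_def sum_step[OF assms]
    by (intro sum.cong refl) (simp add: degrees_step_edge[OF assms] power_mult_distrib)
  also have "\<dots> = (\<Sum>e\<in>E. 2 ^ (p + 1) * (\<Sum>x\<in>e. real (deg E x) ^ p) + 2 ^ (p + 2))"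
    using wf_graph_card_edge[OF assms]
    by (intro sum.cong refl) (simp add: sum.distrib sum_distrib_left)
  finally show ?thesis
    unfolding degree_moment_def by (simp add: sum.distrib sum_distrib_left)
qed

lemma degree_product_sum_step:
  assumes "wf_graph E"
  shows "(\<Sum>f\<in>step E. \<Prod>v\<in>f. real (deg (step E) v)) = 8 * degree_moment 1 E"
  unfolding sum_step[OF assms] degree_moment_def
  by (simp add: degrees_step_edge[OF assms] sum_distrib_left cong: sum.cong)

lemma pearson_eq_degree_moments:
  "pearson E = (real (card E) * (\<Sum>e\<in>E. \<Prod>v\<in>e. real (deg E v)) - (degree_moment 1 E / 2) ^ 2)
     / (real (card E) * (degree_moment 2 E / 2) - (degree_moment 1 E / 2) ^ 2)"
  unfolding pearson_def degree_moment_def Let_def by (simp add: sum_divide_distrib)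

lemma wf_graph_C4: "wf_graph C4"
  unfolding wf_graph_def C4_def verts_def by auto

lemma card_C4: "card C4 = 4"
  unfolding C4_def by (simp add: doubleton_eq_iff)

lemma deg_C4_Base: "deg C4 (Base 0) = 2" "deg C4 (Base 1) = 2" "deg C4 (Base 2) = 2" "deg C4 (Base 3) = 2"
proof -
  have "{e \<in> C4. Base 0 \<in> e} = {{Base 0, Base 1}, {Base 3, Base 0}}"
       "{e \<in> C4. Base 1 \<in> e} = {{Base 0, Base 1}, {Base 1, Base 2}}"
       "{e \<in> C4. Base 2 \<in> e} = {{Base 1, Base 2}, {Base 2, Base 3}}"
       "{e \<in> C4. Base 3 \<in> e} = {{Base 2, Base 3}, {Base 3, Base 0}}"
    unfolding C4_def by auto
  then show "deg C4 (Base 0) = 2" "deg C4 (Base 1) = 2" "deg C4 (Base 2) = 2" "deg C4 (Base 3) = 2"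
    unfolding deg_def by (simp_all add: doubleton_eq_iff)
qed

lemma degree_moment_C4: "degree_moment p C4 = 8 * 2 ^ p"
proof -
  have "deg C4 v = 2" if "e \<in> C4" "v \<in> e" for e v
  proof -
    from that have "v \<in> {Base 0, Base 1, Base 2, Base 3}" unfolding C4_def by auto
    then show ?thesis using deg_C4_Base by auto
  qed
  then have "degree_moment p C4 = (\<Sum>e\<in>C4. \<Sum>v\<in>e. 2 ^ p)"
    unfolding degree_moment_def by (intro sum.cong refl) auto
  also have "\<dots> = (\<Sum>e\<in>C4. 2 * 2 ^ p)"
    using wf_graph_card_edge[OF wf_graph_C4] by (intro sum.cong refl) simp
  finally show ?thesis using card_C4 by simp
qed

lemma F_1: "F (Suc 0) = C4"
  unfolding F_def by simp

lemma F_Suc: "1 \<le> g \<Longrightarrow> F (Suc g) = step (F g)"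
  unfolding F_def by (cases g) simp_all

lemma wf_graph_F: "1 \<le> g \<Longrightarrow> wf_graph (F g)"
  by (induction g rule: nat_induct_at_least) (simp_all add: F_1 F_Suc wf_graph_C4 wf_graph_step)

lemma card_F: "1 \<le> g \<Longrightarrow> card (F g) = 4 ^ g"
  by (induction g rule: nat_induct_at_least) (simp_all add: F_1 F_Suc card_C4 card_step wf_graph_F)

lemma degree_moment_F_Suc:
  assumes "1 \<le> g"
  shows "degree_moment p (F (Suc g)) = 2 ^ (p + 1) * degree_moment p (F g) + 2 ^ (p + 2) * 4 ^ g"
  using degree_moment_step[OF wf_graph_F[OF assms], of p] card_F[OF assms] F_Suc[OF assms] by simp

lemma degree_moment_1_F: "1 \<le> g \<Longrightarrow> degree_moment 1 (F g) = 4 ^ g * (2 * real g + 2)"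
proof (induction g rule: nat_induct_at_least)
  case base
  show ?case by (simp add: F_1 degree_moment_C4)
next
  case (Suc g)
  have "degree_moment 1 (F (Suc g)) = 4 * degree_moment 1 (F g) + 8 * 4 ^ g"
    using degree_moment_F_Suc[OF Suc.hyps, of 1] by simp
  then show ?case using Suc.IH by (simp add: algebra_simps)
qed

lemma degree_moment_2_F: "1 \<le> g \<Longrightarrow> degree_moment 2 (F g) = 6 * 8 ^ g - 4 * 4 ^ g"
proof (induction g rule: nat_induct_at_least)
  case base
  show ?case by (simp add: F_1 degree_moment_C4)
next
  case (Suc g)
  have "degree_moment 2 (F (Suc g)) = 8 * degree_moment 2 (F g) + 16 * 4 ^ g"
    using degree_moment_F_Suc[OF Suc.hyps, of 2] by simp
  then show ?case using Suc.IH by (simp add: algebra_simps)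
qed

lemma degree_product_sum_F:
  assumes "2 \<le> g" shows "(\<Sum>e\<in>F g. \<Prod>v\<in>e. real (deg (F g) v)) = 4 ^ g * (4 * real g)"
proof -
  obtain n where n: "g = Suc n" "1 \<le> n" using assms by (cases g) auto
  then have "(\<Sum>e\<in>F g. \<Prod>v\<in>e. real (deg (F g) v)) = 8 * degree_moment 1 (F n)"
    using degree_product_sum_step[OF wf_graph_F] F_Suc by simp
  also have "\<dots> = 4 ^ g * (4 * real g)"
    using degree_moment_1_F[OF n(2)] n(1) by (simp add: algebra_simps)
  finally show ?thesis .
qed

theorem proposition5:
  fixes g :: nat
  assumes "g \<ge> 2"
  shows "pearson (F g) = (real g - 1) ^ 2 / (- 3 * 2 ^ g + (real g) ^ 2 + 2 * real g + 3)"
proof -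
  define s :: real where "s = 4 ^ g"
  have "1 \<le> g" using assms by simp
  have "(8 :: real) ^ g = s * 2 ^ g" unfolding s_def by (simp flip: power_mult_distrib)
  then have half_moment_2: "degree_moment 2 (F g) / 2 = 3 * s * 2 ^ g - 2 * s"
    using degree_moment_2_F[OF \<open>1 \<le> g\<close>] unfolding s_def by simp
  have half_moment_1: "degree_moment 1 (F g) / 2 = s * (real g + 1)"
    using degree_moment_1_F[OF \<open>1 \<le> g\<close>] unfolding s_def by simp
  have "pearson (F g) = (s * (s * (4 * real g)) - (s * (real g + 1)) ^ 2)
      / (s * (3 * s * 2 ^ g - 2 * s) - (s * (real g + 1)) ^ 2)"
    unfolding pearson_eq_degree_moments half_moment_1 half_moment_2
      degree_product_sum_F[OF assms] card_F[OF \<open>1 \<le> g\<close>] s_def by simp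
  also have "\<dots> = (- s\<^sup>2 * (real g - 1) ^ 2) / (- s\<^sup>2 * (- 3 * 2 ^ g + (real g) ^ 2 + 2 * real g + 3))"
    by (simp add: power2_eq_square algebra_simps)
  also have "\<dots> = (real g - 1) ^ 2 / (- 3 * 2 ^ g + (real g) ^ 2 + 2 * real g + 3)"
    unfolding s_def by simp
  finally show ?thesis .
qed

end
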